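(* Let $(\mathcal{X},c)$ be a metric space with diameter at most $1$, let $\mu,\nu$ be probability distributions on $\mathcal{X}$, and let $p\ge1$ and $k>0$. Then $$\mathrm{RPW}_{p,k}(\mu,\nu)\le\tfrac1k W_p(\mu,\nu)\le\mathrm{RPW}_{p,k}(\mu,\nu)+k^{-\frac{p+1}{p}}.$$
   Context: $c(x,y)\le 1$ for all $x,y$; distributions are Borel probability measures. For $p\in[1,\infty)$ and $\alpha\in[0,1]$, a partial transport plan of mass $\alpha$ between $\mu,\nu$ is a nonnegative measure $\gamma$ on $\mathcal{X}\times\mathcal{X}$ of total mass $\alpha$ with first marginal $\le\mu$ and second marginal $\le\nu$ (setwise); its cost is $w_p(\gamma)=(\int c^p\,d\gamma)^{1/p}$, and $W_{p,\alpha}(\mu,\nu)$ is the infimum of $w_p(\gamma)$ over such $\gamma$; $W_p=W_{p,1}$ is the $p$-Wasserstein distance. For $k\ge0$, $\mathrm{RPW}_{p,k}(\mu,\nu)=\inf\{\varepsilon\in[0,1]: W_{p,1-\varepsilon}(\mu,\nu)\le k\varepsilon\}$. *)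

theory Defs
  imports "HOL-Probability.Probability"
begin

text \<open>Cost is the metric c = dist. Distributions are Borel measures on the type 'a;
  transport plans are Borel measures on the product metric space 'a \<times> 'a.\<close>

definition partial_plan ::
  "real \<Rightarrow> 'a::metric_space measure \<Rightarrow> 'a measure \<Rightarrow> ('a \<times> 'a) measure \<Rightarrow> bool" where
  "partial_plan \<alpha> \<mu> \<nu> \<gamma> \<longleftrightarrow>
     sets \<gamma> = sets (borel :: ('a \<times> 'a) measure) \<and>
     emeasure \<gamma> (space \<gamma>) = ennreal \<alpha> \<and>
     (\<forall>A \<in> sets (borel :: 'a measure). emeasure \<gamma> (A \<times> UNIV) \<le> emeasure \<mu> A) \<and>
     (\<forall>B \<in> sets (borel :: 'a measure). emeasure \<gamma> (UNIV \<times> B) \<le> emeasure \<nu> B)"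

definition plan_cost :: "real \<Rightarrow> ('a::metric_space \<times> 'a) measure \<Rightarrow> real" where
  "plan_cost p \<gamma> = (enn2real (\<integral>\<^sup>+ z. ennreal (dist (fst z) (snd z) powr p) \<partial>\<gamma>)) powr (1 / p)"

text \<open>Partial Wasserstein distance W_{p,alpha}; infimum in ennreal (empty infimum = top).\<close>
definition W_partial :: "real \<Rightarrow> real \<Rightarrow> 'a::metric_space measure \<Rightarrow> 'a measure \<Rightarrow> ennreal" where
  "W_partial p \<alpha> \<mu> \<nu> = (INF \<gamma> \<in> {\<gamma>. partial_plan \<alpha> \<mu> \<nu> \<gamma>}. ennreal (plan_cost p \<gamma>))"

definition W_dist :: "real \<Rightarrow> 'a::metric_space measure \<Rightarrow> 'a measure \<Rightarrow> ennreal" where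
  "W_dist p \<mu> \<nu> = W_partial p 1 \<mu> \<nu>"

definition RPW :: "real \<Rightarrow> real \<Rightarrow> 'a::metric_space measure \<Rightarrow> 'a measure \<Rightarrow> real" where
  "RPW p k \<mu> \<nu> = Inf {\<epsilon> \<in> {0..1}. W_partial p (1 - \<epsilon>) \<mu> \<nu> \<le> ennreal (k * \<epsilon>)}"

end

theory Submission
  imports Defs
begin

text \<open>
  Lower bound: scaling a coupling by 1 - \<epsilon> shows W_{p,1-\<epsilon>} \<le> W_p, so \<epsilon> = W_p / k is
  feasible in the definition of RPW.
  Upper bound: a partial plan of mass 1 - \<epsilon> is completed to a coupling by adding the product
  of the two leftover marginals (each of mass \<epsilon>), rescaled by 1 / \<epsilon>. Since c \<le> 1 this adds
  at most \<epsilon> to the integral of c^p, whence W_p \<le> W_{p,1-\<epsilon>} + \<epsilon>^(1/p) \<le> k \<epsilon> + \<epsilon>^(1/p)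
  for every feasible \<epsilon>, and by continuity also for \<epsilon> = RPW. Finally \<epsilon> = 1 / k is always
  feasible, so RPW^(1/p) / k \<le> k^(-(p+1)/p).
\<close>

section \<open>Borel measures on product spaces\<close>

lemma Pair_vimage_in_borel:
  "S \<in> sets (borel :: ('a::topological_space \<times> 'b::topological_space) measure)
    \<Longrightarrow> Pair x -` S \<in> sets borel"
  by (intro measurable_sets_borel[OF borel_measurable_continuous_onI] continuous_intros)

lemma borel_measurable_emeasure_Pair_vimage_open:
  fixes M :: "'b::topological_space measure" and S :: "('a::first_countable_topology \<times> 'b) set"
  assumes M: "sets M = sets borel" and S: "open S"
  shows "(\<lambda>x. emeasure M (Pair x -` S)) \<in> borel_measurable borel"
proof -
  have "closed {x. emeasure M (Pair x -` S) \<le> t}" for t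
    unfolding closed_sequential_limits
  proof (intro allI impI, elim conjE)
    fix xs l assume le: "\<forall>n. xs n \<in> {x. emeasure M (Pair x -` S) \<le> t}" and lim: "xs \<longlonglongrightarrow> l"
    \<comment> \<open>As \<open>S\<close> is open, each point of the section at \<open>l\<close> lies in the sections at \<open>xs n\<close> for all
      large \<open>n\<close>, i.e. in some \<open>T N\<close>.\<close>
    define T where "T N = (\<Inter>n\<in>{N..}. Pair (xs n) -` S)" for N
    have T_sets: "range T \<subseteq> sets M"
      unfolding T_def M using Pair_vimage_in_borel[OF borel_open[OF S]]
      by (auto intro!: sets.countable_INT')
    have "incseq T" unfolding T_def by (intro monoI) auto
    have "Pair l -` S \<subseteq> (\<Union>N. T N)"
    proof
      fix y assume "y \<in> Pair l -` S"
      moreover have "(\<lambda>n. (xs n, y)) \<longlonglongrightarrow> (l, y)" using lim by (intro tendsto_intros)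
      ultimately have "eventually (\<lambda>n. (xs n, y) \<in> S) sequentially"
        using topological_tendstoD[OF _ S] by simp
      then show "y \<in> (\<Union>N. T N)" by (auto simp: T_def eventually_sequentially)
    qed
    then have "emeasure M (Pair l -` S) \<le> emeasure M (\<Union>N. T N)"
      using T_sets by (intro emeasure_mono) auto
    also have "\<dots> = (SUP N. emeasure M (T N))"
      using SUP_emeasure_incseq[OF T_sets \<open>incseq T\<close>] by simp
    also have "\<dots> \<le> t"
    proof (rule SUP_least)
      fix N
      have "emeasure M (T N) \<le> emeasure M (Pair (xs N) -` S)"
        using Pair_vimage_in_borel[OF borel_open[OF S]] M by (intro emeasure_mono) (auto simp: T_def)
      also have "\<dots> \<le> t" using le by simp
      finally show "emeasure M (T N) \<le> t" .
    qed
    finally show "l \<in> {x. emeasure M (Pair x -` S) \<le> t}" by simp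
  qed
  then show ?thesis
    by (intro borel_measurableI_le) (auto intro: borel_closed)
qed

lemma emeasure_Pair_vimage_UN:
  assumes "sets M = sets borel" "range A \<subseteq> sets borel" "disjoint_family A"
  shows "emeasure M (Pair x -` (\<Union>i. A i)) = (\<Sum>i. emeasure M (Pair x -` A i))"
proof -
  have "Pair x -` (\<Union>i. A i) = (\<Union>i. Pair x -` A i)" by auto
  moreover have "disjoint_family (\<lambda>i. Pair x -` A i)"
    using assms(3) by (auto simp: disjoint_family_on_def)
  ultimately show ?thesis
    using assms(1,2) by (simp add: suminf_emeasure image_subset_iff Pair_vimage_in_borel)
qed

lemma borel_measurable_emeasure_Pair_vimage:
  fixes M :: "'b::topological_space measure" and S :: "('a::first_countable_topology \<times> 'b) set"
  assumes M: "sets M = sets borel" "finite_measure M" and S: "S \<in> sets borel"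
  shows "(\<lambda>x. emeasure M (Pair x -` S)) \<in> borel_measurable borel"
proof -
  have space_M: "space M = UNIV" using sets_eq_imp_space_eq[OF M(1)] by simp
  have "Int_stable {S. open S}" "{S. open S} \<subseteq> Pow UNIV" "S \<in> sigma_sets UNIV {S. open S}"
    using S by (auto simp: Int_stable_def sets_borel)
  then show ?thesis
  proof (induction rule: sigma_sets_induct_disjoint)
    case (basic A)
    then show ?case using borel_measurable_emeasure_Pair_vimage_open[OF M(1)] by simp
  next
    case empty
    show ?case by simp
  next
    case (compl A)
    have "emeasure M (Pair x -` (UNIV - A)) = emeasure M (space M) - emeasure M (Pair x -` A)" for x
    proof -
      have "Pair x -` (UNIV - A) = space M - Pair x -` A" using space_M by auto
      then show ?thesis
        using Pair_vimage_in_borel[of A x] compl(1) M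
        by (simp add: emeasure_compl finite_measure.emeasure_finite sets_borel)
    qed
    then show ?case using compl(2) by simp
  next
    case (union A)
    then show ?case by (simp add: emeasure_Pair_vimage_UN[OF M(1)] sets_borel)
  qed
qed

lemma sigma_algebra_borel: "sigma_algebra UNIV (sets (borel :: 'a::topological_space measure))"
  by (metis sets.sigma_algebra_axioms space_borel)

text \<open>Unlike \<open>M \<Otimes>\<^sub>M N\<close>, this measure lives on the Borel sets of the product topology, which may
  be strictly larger than the product of the Borel \<sigma>-algebras.\<close>
definition borel_pair_measure ::
  "'a::topological_space measure \<Rightarrow> 'b::topological_space measure \<Rightarrow> ('a \<times> 'b) measure" where
  "borel_pair_measure M N = measure_of UNIV (sets borel) (\<lambda>S. \<integral>\<^sup>+x. emeasure N (Pair x -` S) \<partial>M)"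

lemma sets_borel_pair_measure [simp]: "sets (borel_pair_measure M N) = sets borel"
  unfolding borel_pair_measure_def by (rule sigma_algebra.sets_measure_of_eq[OF sigma_algebra_borel])

lemma emeasure_borel_pair_measure:
  fixes M :: "'a::first_countable_topology measure" and N :: "'b::topological_space measure"
  assumes M: "sets M = sets borel" and N: "sets N = sets borel" "finite_measure N"
    and S: "S \<in> sets borel"
  shows "emeasure (borel_pair_measure M N) S = (\<integral>\<^sup>+x. emeasure N (Pair x -` S) \<partial>M)"
  unfolding borel_pair_measure_def
proof (rule emeasure_measure_of_sigma)
  show "sigma_algebra UNIV (sets (borel :: ('a \<times> 'b) measure))"
    by (rule sigma_algebra_borel)
  show "positive (sets borel) (\<lambda>S. \<integral>\<^sup>+x. emeasure N (Pair x -` S) \<partial>M)"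
    by (simp add: positive_def)
  show "countably_additive (sets borel) (\<lambda>S. \<integral>\<^sup>+x. emeasure N (Pair x -` S) \<partial>M)"
    unfolding countably_additive_def
  proof (intro allI impI)
    fix A :: "nat \<Rightarrow> ('a \<times> 'b) set"
    assume A: "range A \<subseteq> sets borel" "disjoint_family A"
    have "(\<lambda>x. emeasure N (Pair x -` A i)) \<in> borel_measurable M" for i
      unfolding measurable_cong_sets[OF M refl]
      using A(1) by (intro borel_measurable_emeasure_Pair_vimage[OF N]) auto
    then show "(\<Sum>i. \<integral>\<^sup>+x. emeasure N (Pair x -` A i) \<partial>M) = (\<integral>\<^sup>+x. emeasure N (Pair x -` \<Union>(range A)) \<partial>M)"
      by (simp add: emeasure_Pair_vimage_UN[OF N(1) A] nn_integral_suminf)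
  qed
qed (fact S)

lemma emeasure_borel_pair_measure_Times:
  fixes M :: "'a::first_countable_topology measure" and N :: "'b::topological_space measure"
  assumes M: "sets M = sets borel" and N: "sets N = sets borel" "finite_measure N"
    and A: "A \<in> sets borel" and B: "B \<in> sets borel"
  shows "emeasure (borel_pair_measure M N) (A \<times> B) = emeasure M A * emeasure N B"
proof -
  have "emeasure (borel_pair_measure M N) (A \<times> B) = (\<integral>\<^sup>+x. emeasure N B * indicator A x \<partial>M)"
    using emeasure_borel_pair_measure[OF M N borel_Times[OF A B]]
    by (auto intro!: nn_integral_cong simp: indicator_def)
  also have "\<dots> = emeasure N B * emeasure M A"
    using A M by (intro nn_integral_cmult_indicator) simp
  finally show ?thesis by (simp only: mult.commute)
qed

definition add_measure :: "'a measure \<Rightarrow> 'a measure \<Rightarrow> 'a measure" where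
  "add_measure M N = measure_of (space M) (sets M) (\<lambda>A. emeasure M A + emeasure N A)"

lemma sets_add_measure [simp]: "sets (add_measure M N) = sets M"
  by (simp add: add_measure_def)

lemma space_add_measure [simp]: "space (add_measure M N) = space M"
  by (simp add: add_measure_def)

lemma emeasure_add_measure:
  assumes "sets N = sets M" "A \<in> sets M"
  shows "emeasure (add_measure M N) A = emeasure M A + emeasure N A"
  unfolding add_measure_def
proof (rule emeasure_measure_of_sigma)
  show "countably_additive (sets M) (\<lambda>A. emeasure M A + emeasure N A)"
    unfolding countably_additive_def
  proof (intro allI impI)
    fix A :: "nat \<Rightarrow> 'a set" assume "range A \<subseteq> sets M" "disjoint_family A"
    then show "(\<Sum>i. emeasure M (A i) + emeasure N (A i)) = emeasure M (\<Union>(range A)) + emeasure N (\<Union>(range A))"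
      using assms(1) by (simp add: suminf_add[symmetric] suminf_emeasure)
  qed
qed (simp_all add: sets.sigma_algebra_axioms positive_def assms(2))

lemma le_add_measure:
  assumes "sets N = sets M"
  shows "M \<le> add_measure M N"
proof -
  have "emeasure M A \<le> emeasure (add_measure M N) A" for A
    using assms by (cases "A \<in> sets M") (simp_all add: emeasure_add_measure emeasure_notin_sets)
  then show ?thesis by (simp add: le_measure_iff le_fun_def)
qed

lemma emeasure_add_diff_measure_distr:
  assumes M: "finite_measure M" "sets M = sets borel" and G: "finite_measure G"
    and h: "h \<in> borel_measurable G"
    and le: "\<And>A. A \<in> sets borel \<Longrightarrow> emeasure G (h -` A \<inter> space G) \<le> emeasure M A"
    and A: "A \<in> sets borel"
  shows "emeasure G (h -` A \<inter> space G) + emeasure (diff_measure M (distr G borel h)) A = emeasure M A"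
  using emeasure_diff_measure[OF M(1) finite_measure.finite_measure_distr[OF G h]] M(2) h le A
  by (simp add: emeasure_distr add_diff_inverse_ennreal)

lemma nn_integral_le_add_measure_diff:
  assumes MN: "M \<le> N" "sets M = sets N" and fin: "emeasure M (space M) \<noteq> \<top>"
    and f: "f \<in> borel_measurable M" "\<And>x. f x \<le> 1"
  shows "(\<integral>\<^sup>+x. f x \<partial>N) \<le> (\<integral>\<^sup>+x. f x \<partial>M) + (emeasure N (space N) - emeasure M (space M))"
proof -
  have space_eq: "space M = space N" using sets_eq_imp_space_eq[OF MN(2)] .
  have f_N: "f \<in> borel_measurable N"
    unfolding measurable_cong_sets[OF MN(2)[symmetric] refl] by (fact f(1))
  \<comment> \<open>Pass to the complementary integrand \<open>1 - f\<close>, whose integral can only grow with the measure.\<close>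
  have total: "(\<integral>\<^sup>+x. f x \<partial>L) + (\<integral>\<^sup>+x. 1 - f x \<partial>L) = emeasure L (space L)"
    if "f \<in> borel_measurable L" for L
    using that f(2) by (simp add: nn_integral_add[symmetric] add_diff_inverse_ennreal)
  have mono: "(\<integral>\<^sup>+x. 1 - f x \<partial>M) \<le> (\<integral>\<^sup>+x. 1 - f x \<partial>N)"
    using MN by (intro nn_integral_mono_measure) auto
  have mass_le: "emeasure M (space M) \<le> emeasure N (space N)"
    using MN space_eq by (simp add: le_measure_iff le_fun_def)
  have "(\<integral>\<^sup>+x. 1 - f x \<partial>M) + (\<integral>\<^sup>+x. f x \<partial>N) \<le> (\<integral>\<^sup>+x. 1 - f x \<partial>N) + (\<integral>\<^sup>+x. f x \<partial>N)"
    using mono by (rule add_right_mono)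
  also have "\<dots> = emeasure M (space M) + (emeasure N (space N) - emeasure M (space M))"
    using total[OF f_N] mass_le
    by (simp add: add_diff_inverse_ennreal add.commute)
  also have "\<dots> = (\<integral>\<^sup>+x. 1 - f x \<partial>M) + ((\<integral>\<^sup>+x. f x \<partial>M) + (emeasure N (space N) - emeasure M (space M)))"
    using total[OF f(1)] by (simp add: ac_simps)
  finally have bound: "(\<integral>\<^sup>+x. 1 - f x \<partial>M) + (\<integral>\<^sup>+x. f x \<partial>N)
      \<le> (\<integral>\<^sup>+x. 1 - f x \<partial>M) + ((\<integral>\<^sup>+x. f x \<partial>M) + (emeasure N (space N) - emeasure M (space M)))" .
  have "(\<integral>\<^sup>+x. 1 - f x \<partial>M) \<le> emeasure M (space M)"
    unfolding total[OF f(1), symmetric] by (rule add_increasing) simp_all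
  then have "(\<integral>\<^sup>+x. 1 - f x \<partial>M) \<noteq> \<top>"
    by (rule neq_top_trans[OF fin])
  with bound show ?thesis by (simp add: ennreal_add_left_cancel_le)
qed

lemma powr_add_le_add_powr:
  fixes a b q :: real
  assumes "0 \<le> a" "0 \<le> b" "0 \<le> q" "q \<le> 1"
  shows "(a + b) powr q \<le> a powr q + b powr q"
proof (cases "a + b = 0")
  case False
  define s where "s = a + b"
  have s: "0 < s" using False assms unfolding s_def by simp
  have "t \<le> t powr q" if "0 \<le> t" "t \<le> 1" for t :: real
    using powr_mono'[OF assms(4) that] that by simp
  then have "a / s + b / s \<le> (a / s) powr q + (b / s) powr q"
    using assms s by (intro add_mono) (auto simp: s_def field_simps)
  then have "s powr q * 1 \<le> s powr q * ((a / s) powr q + (b / s) powr q)"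
    using s by (intro mult_left_mono) (auto simp: s_def add_divide_distrib[symmetric])
  then show ?thesis
    using assms s by (simp add: s_def powr_divide distrib_left)
qed (use assms in auto)

lemma inverse_powr_divide:
  fixes k p :: real
  assumes "0 < k" "p \<noteq> 0"
  shows "(1 / k) powr (1 / p) / k = k powr (- (p + 1) / p)"
proof -
  have "(1 / k) powr (1 / p) / k = 1 / k powr (1 / p + 1)"
    using assms by (simp add: powr_divide powr_add)
  also have "\<dots> = k powr (- (1 / p + 1))"
    by (simp only: powr_minus_divide)
  also have "- (1 / p + 1) = - (p + 1) / p"
    using assms by (simp add: field_simps)
  finally show ?thesis .
qed

section \<open>Partial transport plans\<close>

definition cost_integral :: "real \<Rightarrow> ('a::metric_space \<times> 'a) measure \<Rightarrow> ennreal" where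
  "cost_integral p \<gamma> = (\<integral>\<^sup>+z. ennreal (dist (fst z) (snd z) powr p) \<partial>\<gamma>)"

lemma plan_cost_eq: "plan_cost p \<gamma> = enn2real (cost_integral p \<gamma>) powr (1 / p)"
  by (simp add: plan_cost_def cost_integral_def)

lemma borel_measurable_cost:
  fixes \<gamma> :: "('a::metric_space \<times> 'a) measure"
  assumes "sets \<gamma> = sets borel"
  shows "(\<lambda>z. ennreal (dist (fst z) (snd z) powr p)) \<in> borel_measurable \<gamma>"
proof -
  have "(\<lambda>z::'a \<times> 'a. dist (fst z) (snd z)) \<in> borel_measurable borel"
    by (intro borel_measurable_continuous_onI continuous_intros)
  then show ?thesis unfolding measurable_cong_sets[OF assms refl] by measurable
qed

lemma dist_powr_le_1:
  fixes x y :: "'a::metric_space"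
  assumes "\<forall>x y::'a. dist x y \<le> 1" "0 \<le> p"
  shows "dist x y powr p \<le> 1"
  using powr_mono2[OF assms(2) zero_le_dist, of x y 1] assms(1) by simp

lemma cost_integral_le_emeasure_space:
  fixes \<gamma> :: "('a::metric_space \<times> 'a) measure"
  assumes diam: "\<forall>x y::'a. dist x y \<le> 1" and "0 \<le> p"
  shows "cost_integral p \<gamma> \<le> emeasure \<gamma> (space \<gamma>)"
proof -
  have "cost_integral p \<gamma> \<le> (\<integral>\<^sup>+z. 1 \<partial>\<gamma>)"
    unfolding cost_integral_def using dist_powr_le_1[OF assms] by (intro nn_integral_mono) simp
  then show ?thesis by simp
qed

lemma cost_integral_le_add_of_le:
  fixes g G :: "('a::metric_space \<times> 'a) measure"
  assumes diam: "\<forall>x y::'a. dist x y \<le> 1" and p: "0 \<le> p"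
    and g: "partial_plan (1 - e) \<mu> \<nu> g" and G: "partial_plan 1 \<mu> \<nu> G" and "g \<le> G"
    and e: "0 \<le> e" "e \<le> 1"
  shows "cost_integral p G \<le> cost_integral p g + ennreal e"
proof -
  have sets_g: "sets g = sets borel" and mass_g: "emeasure g (space g) = ennreal (1 - e)"
    and sets_G: "sets G = sets borel" and mass_G: "emeasure G (space G) = 1"
    using g G by (auto simp: partial_plan_def)
  have "cost_integral p G \<le> cost_integral p g + (emeasure G (space G) - emeasure g (space g))"
    unfolding cost_integral_def
    using sets_g sets_G \<open>g \<le> G\<close> mass_g borel_measurable_cost[OF sets_g] dist_powr_le_1[OF diam p]
    by (intro nn_integral_le_add_measure_diff) auto
  also have "emeasure G (space G) - emeasure g (space g) = ennreal e"
    using mass_G mass_g ennreal_minus[of "1 - e" 1] e by simp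
  finally show ?thesis .
qed

lemma partial_plan_null: "partial_plan 0 \<mu> \<nu> (null_measure borel)"
  by (simp add: partial_plan_def)

lemma W_partial_zero:
  fixes \<mu> \<nu> :: "'a::metric_space measure"
  shows "W_partial p 0 \<mu> \<nu> = 0"
proof -
  have "W_partial p 0 \<mu> \<nu> \<le> ennreal (plan_cost p (null_measure borel :: ('a \<times> 'a) measure))"
    unfolding W_partial_def by (rule INF_lower) (simp add: partial_plan_null)
  then show ?thesis by (simp add: plan_cost_def)
qed

lemma partial_plan_scale:
  assumes "partial_plan a \<mu> \<nu> \<gamma>" "0 \<le> a" "0 \<le> b" "b \<le> 1"
  shows "partial_plan (b * a) \<mu> \<nu> (scale_measure (ennreal b) \<gamma>)"
proof -
  have le: "ennreal b * x \<le> x" for x :: ennreal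
    using mult_right_mono[of "ennreal b" 1 x] assms(4) by simp
  show ?thesis
    using assms le order_trans[OF le] unfolding partial_plan_def
    by (auto simp: ennreal_mult space_scale_measure)
qed

lemma plan_cost_scale_le:
  assumes "sets \<gamma> = sets borel" "0 \<le> p" "0 \<le> b" "b \<le> 1"
  shows "plan_cost p (scale_measure (ennreal b) \<gamma>) \<le> plan_cost p \<gamma>"
proof -
  have "cost_integral p (scale_measure (ennreal b) \<gamma>) = ennreal b * cost_integral p \<gamma>"
    unfolding cost_integral_def using borel_measurable_cost[OF assms(1)]
    by (simp add: nn_integral_scale_measure)
  then show ?thesis
    using assms by (auto simp: plan_cost_eq enn2real_mult mult_left_le_one_le intro!: powr_mono2)
qed

lemma W_partial_le_W_dist:
  assumes "0 \<le> p" "0 \<le> a" "a \<le> 1"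
  shows "W_partial p a \<mu> \<nu> \<le> W_dist p \<mu> \<nu>"
  unfolding W_dist_def W_partial_def
proof (rule INF_greatest, clarify)
  fix \<gamma> assume \<gamma>: "partial_plan 1 \<mu> \<nu> \<gamma>"
  then have "partial_plan a \<mu> \<nu> (scale_measure (ennreal a) \<gamma>)"
    using partial_plan_scale[OF \<gamma> _ assms(2,3)] by simp
  moreover have "plan_cost p (scale_measure (ennreal a) \<gamma>) \<le> plan_cost p \<gamma>"
    using \<gamma> assms by (intro plan_cost_scale_le) (auto simp: partial_plan_def)
  ultimately show "(INF \<gamma>\<in>{\<gamma>. partial_plan a \<mu> \<nu> \<gamma>}. ennreal (plan_cost p \<gamma>)) \<le> ennreal (plan_cost p \<gamma>)"
    by (intro INF_lower2[of "scale_measure (ennreal a) \<gamma>"] ennreal_leI) simp_all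
qed

section \<open>The robust partial Wasserstein distance\<close>

lemma RPW_le:
  assumes "0 \<le> e" "e \<le> 1" "W_partial p (1 - e) \<mu> \<nu> \<le> ennreal (k * e)"
  shows "RPW p k \<mu> \<nu> \<le> e"
  unfolding RPW_def using assms by (intro cInf_lower bdd_belowI[of _ 0]) auto

lemma RPW_in_closure:
  assumes "0 \<le> k"
  shows "RPW p k \<mu> \<nu> \<in> closure {\<epsilon> \<in> {0..1}. W_partial p (1 - \<epsilon>) \<mu> \<nu> \<le> ennreal (k * \<epsilon>)}"
  unfolding RPW_def using assms
  by (intro closure_contains_Inf bdd_belowI[of _ 0]) (auto simp: W_partial_zero intro!: exI[of _ 1])

lemma RPW_nonneg:
  assumes "0 \<le> k"
  shows "0 \<le> RPW p k \<mu> \<nu>"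
  unfolding RPW_def using assms
  by (intro cInf_greatest) (auto simp: W_partial_zero intro!: exI[of _ 1])

lemma RPW_le_W_dist_div:
  assumes "0 \<le> p" "0 < k"
  shows "ennreal (RPW p k \<mu> \<nu>) \<le> W_dist p \<mu> \<nu> / ennreal k"
proof (cases "W_dist p \<mu> \<nu>" rule: ennreal_cases)
  case (real w)
  have "RPW p k \<mu> \<nu> \<le> w / k"
  proof (cases "w / k \<le> 1")
    case True
    have "W_partial p (1 - w / k) \<mu> \<nu> \<le> W_dist p \<mu> \<nu>"
      using assms True real by (intro W_partial_le_W_dist) auto
    also have "\<dots> = ennreal (k * (w / k))"
      using real assms by simp
    finally have "W_partial p (1 - w / k) \<mu> \<nu> \<le> ennreal (k * (w / k))" .
    then show ?thesis using True real assms by (intro RPW_le) auto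
  next
    case False
    have "RPW p k \<mu> \<nu> \<le> 1"
      using RPW_le[of 1 p \<mu> \<nu> k] assms by (simp add: W_partial_zero)
    with False show ?thesis by linarith
  qed
  then show ?thesis using real assms by (simp add: divide_ennreal)
qed (use assms in \<open>simp add: ennreal_top_divide\<close>)

locale borel_prob_pair = \<mu>: prob_space \<mu> + \<nu>: prob_space \<nu>
  for \<mu> \<nu> :: "'a::metric_space measure" +
  assumes sets_\<mu>: "sets \<mu> = sets borel" and sets_\<nu>: "sets \<nu> = sets borel"
begin

lemma partial_plan_residuals:
  assumes g: "partial_plan (1 - e) \<mu> \<nu> g" and e: "0 \<le> e" "e \<le> 1"
  obtains \<mu>' \<nu>' where "sets \<mu>' = sets borel" "sets \<nu>' = sets borel" "finite_measure \<nu>'"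
    "emeasure \<mu>' UNIV = ennreal e" "emeasure \<nu>' UNIV = ennreal e"
    "\<And>A. A \<in> sets borel \<Longrightarrow> emeasure g (A \<times> UNIV) + emeasure \<mu>' A = emeasure \<mu> A"
    "\<And>B. B \<in> sets borel \<Longrightarrow> emeasure g (UNIV \<times> B) + emeasure \<nu>' B = emeasure \<nu> B"
proof -
  have sets_g: "sets g = sets borel" and mass_g: "emeasure g (space g) = ennreal (1 - e)"
    and g_fst: "\<And>A. A \<in> sets borel \<Longrightarrow> emeasure g (A \<times> UNIV) \<le> emeasure \<mu> A"
    and g_snd: "\<And>B. B \<in> sets borel \<Longrightarrow> emeasure g (UNIV \<times> B) \<le> emeasure \<nu> B"
    using g by (auto simp: partial_plan_def)
  have space_g: "space g = UNIV" using sets_eq_imp_space_eq[OF sets_g] by simp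
  have space_\<mu>: "space \<mu> = UNIV" and space_\<nu>: "space \<nu> = UNIV"
    using sets_eq_imp_space_eq[OF sets_\<mu>] sets_eq_imp_space_eq[OF sets_\<nu>] by simp_all
  have fin_g: "finite_measure g" by (rule finite_measureI) (simp add: mass_g)
  have fst_g: "fst \<in> borel_measurable g" and snd_g: "snd \<in> borel_measurable g"
    unfolding measurable_cong_sets[OF sets_g refl]
    by (auto intro!: borel_measurable_continuous_onI continuous_intros)
  have vimage: "fst -` A \<inter> space g = A \<times> UNIV" "snd -` A \<inter> space g = UNIV \<times> A" for A :: "'a set"
    by (auto simp: space_g)
  define \<mu>' where "\<mu>' = diff_measure \<mu> (distr g borel fst)"
  define \<nu>' where "\<nu>' = diff_measure \<nu> (distr g borel snd)"
  have sets_\<mu>': "sets \<mu>' = sets borel" and sets_\<nu>': "sets \<nu>' = sets borel"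
    by (simp_all add: \<mu>'_def \<nu>'_def sets_\<mu> sets_\<nu>)
  have g_\<mu>': "emeasure g (A \<times> UNIV) + emeasure \<mu>' A = emeasure \<mu> A" if "A \<in> sets borel" for A
    using emeasure_add_diff_measure_distr[OF \<mu>.finite_measure_axioms sets_\<mu> fin_g fst_g _ that]
    by (simp add: \<mu>'_def vimage g_fst)
  have g_\<nu>': "emeasure g (UNIV \<times> B) + emeasure \<nu>' B = emeasure \<nu> B" if "B \<in> sets borel" for B
    using emeasure_add_diff_measure_distr[OF \<nu>.finite_measure_axioms sets_\<nu> fin_g snd_g _ that]
    by (simp add: \<nu>'_def vimage g_snd)
  have residual_mass: "x = ennreal e" if "ennreal (1 - e) + x = 1" for x
  proof -
    have "x = (ennreal (1 - e) + x) - ennreal (1 - e)" by simp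
    also have "\<dots> = ennreal e" using that ennreal_minus[of "1 - e" 1] e by simp
    finally show ?thesis .
  qed
  have \<mu>'_UNIV: "emeasure \<mu>' UNIV = ennreal e"
    using g_\<mu>'[of UNIV] mass_g space_g \<mu>.emeasure_space_1 space_\<mu> by (intro residual_mass) simp
  have \<nu>'_UNIV: "emeasure \<nu>' UNIV = ennreal e"
    using g_\<nu>'[of UNIV] mass_g space_g \<nu>.emeasure_space_1 space_\<nu> by (intro residual_mass) simp
  have fin_\<nu>': "finite_measure \<nu>'"
    using \<nu>'_UNIV sets_eq_imp_space_eq[OF sets_\<nu>'] by (intro finite_measureI) simp
  show thesis
    using sets_\<mu>' sets_\<nu>' fin_\<nu>' \<mu>'_UNIV \<nu>'_UNIV g_\<mu>' g_\<nu>' by (rule that)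
qed

lemma partial_plan_extend:
  assumes g: "partial_plan (1 - e) \<mu> \<nu> g" and e: "0 \<le> e" "e \<le> 1"
  obtains G where "partial_plan 1 \<mu> \<nu> G" "g \<le> G"
proof -
  obtain \<mu>' \<nu>' where sets_\<mu>': "sets \<mu>' = sets borel" and sets_\<nu>': "sets \<nu>' = sets borel"
    and fin_\<nu>': "finite_measure \<nu>'"
    and \<mu>'_UNIV: "emeasure \<mu>' UNIV = ennreal e" and \<nu>'_UNIV: "emeasure \<nu>' UNIV = ennreal e"
    and g_\<mu>': "\<And>A. A \<in> sets borel \<Longrightarrow> emeasure g (A \<times> UNIV) + emeasure \<mu>' A = emeasure \<mu> A"
    and g_\<nu>': "\<And>B. B \<in> sets borel \<Longrightarrow> emeasure g (UNIV \<times> B) + emeasure \<nu>' B = emeasure \<nu> B"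
    using partial_plan_residuals[OF g e] by blast
  have sets_g: "sets g = sets borel" and mass_g: "emeasure g (UNIV \<times> UNIV) = ennreal (1 - e)"
    using g sets_eq_imp_space_eq[of g borel] by (auto simp: partial_plan_def)
  \<comment> \<open>The residual marginals both have mass \<open>e\<close>, so their product must be rescaled by \<open>1 / e\<close>;
    for \<open>e = 0\<close> the junk value \<open>1 / 0 = 0\<close> is harmless.\<close>
  define R where "R = scale_measure (ennreal (1 / e)) (borel_pair_measure \<mu>' \<nu>')"
  define G where "G = add_measure g R"
  have G_Times: "emeasure G (A \<times> B) = emeasure g (A \<times> B) + ennreal (1 / e) * (emeasure \<mu>' A * emeasure \<nu>' B)"
    if "A \<in> sets borel" "B \<in> sets borel" for A B
    using that borel_Times[OF that] sets_g
    by (simp add: G_def R_def emeasure_add_measure emeasure_borel_pair_measure_Times[OF sets_\<mu>' sets_\<nu>' fin_\<nu>'])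
  have scale: "ennreal (1 / e) * ennreal e \<le> 1"
    using e by (simp add: ennreal_mult[symmetric])
  have marginal: "emeasure g S + ennreal (1 / e) * (ennreal e * emeasure \<rho> X) \<le> emeasure g S + emeasure \<rho> X"
    for S X and \<rho> :: "'a measure"
    using mult_right_mono[OF scale, of "emeasure \<rho> X"] by (simp add: add_left_mono mult.assoc)
  show thesis
  proof
    show "g \<le> G" unfolding G_def by (rule le_add_measure) (simp add: R_def sets_g)
    have "ennreal (1 / e) * (ennreal e * ennreal e) = ennreal e"
      using e by (cases "e = 0") (simp_all flip: ennreal_mult)
    then have "emeasure G (UNIV \<times> UNIV) = ennreal (1 - e) + ennreal e"
      using G_Times[of UNIV UNIV] mass_g \<mu>'_UNIV \<nu>'_UNIV by simp
    also have "\<dots> = 1"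
      using e by (simp flip: ennreal_plus)
    finally have "emeasure G (space G) = 1"
      using sets_eq_imp_space_eq[of G borel] sets_g by (simp add: G_def)
    moreover have "emeasure G (A \<times> UNIV) \<le> emeasure \<mu> A" if "A \<in> sets borel" for A
      using G_Times[OF that, of UNIV] marginal[of "A \<times> UNIV" \<mu>' A] g_\<mu>'[OF that] \<nu>'_UNIV
      by (simp add: mult.commute)
    moreover have "emeasure G (UNIV \<times> B) \<le> emeasure \<nu> B" if "B \<in> sets borel" for B
      using G_Times[OF _ that, of UNIV] marginal[of "UNIV \<times> B" \<nu>' B] g_\<nu>'[OF that] \<mu>'_UNIV
      by simp
    ultimately show "partial_plan 1 \<mu> \<nu> G"
      unfolding partial_plan_def using sets_g by (simp add: G_def)
  qed
qed

lemma W_dist_le_plan_cost_add: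
  assumes diam: "\<forall>x y::'a. dist x y \<le> 1" and p: "p \<ge> 1"
    and g: "partial_plan (1 - e) \<mu> \<nu> g" and e: "0 \<le> e" "e \<le> 1"
  shows "W_dist p \<mu> \<nu> \<le> ennreal (plan_cost p g + e powr (1 / p))"
proof -
  obtain G where G: "partial_plan 1 \<mu> \<nu> G" and "g \<le> G"
    using partial_plan_extend[OF g e] by blast
  have cost_G: "cost_integral p G \<le> cost_integral p g + ennreal e"
    using cost_integral_le_add_of_le[OF diam _ g G \<open>g \<le> G\<close> e] p by simp
  have "cost_integral p g \<le> ennreal (1 - e)"
    using cost_integral_le_emeasure_space[OF diam, of p g] g p by (simp add: partial_plan_def)
  then obtain c where c: "cost_integral p g = ennreal c" "0 \<le> c"
    by (cases "cost_integral p g" rule: ennreal_cases) (simp_all add: top_unique)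
  have "enn2real (cost_integral p G) \<le> c + e"
    using cost_G c e by (simp add: enn2real_leI flip: ennreal_plus)
  then have "plan_cost p G \<le> (c + e) powr (1 / p)"
    using p by (simp add: plan_cost_eq powr_mono2)
  also have "\<dots> \<le> c powr (1 / p) + e powr (1 / p)"
    using c e p by (intro powr_add_le_add_powr) auto
  also have "c powr (1 / p) = plan_cost p g"
    using c by (simp add: plan_cost_eq)
  finally have "plan_cost p G \<le> plan_cost p g + e powr (1 / p)" .
  have "W_dist p \<mu> \<nu> \<le> ennreal (plan_cost p G)"
    unfolding W_dist_def W_partial_def using G by (intro INF_lower) simp
  also have "\<dots> \<le> ennreal (plan_cost p g + e powr (1 / p))"
    by (rule ennreal_leI) fact
  finally show ?thesis .
qed

lemma W_dist_le_W_partial_add: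
  assumes diam: "\<forall>x y::'a. dist x y \<le> 1" and p: "p \<ge> 1" and e: "0 \<le> e" "e \<le> 1"
  shows "W_dist p \<mu> \<nu> \<le> W_partial p (1 - e) \<mu> \<nu> + ennreal (e powr (1 / p))"
proof -
  have "W_dist p \<mu> \<nu> - ennreal (e powr (1 / p)) \<le> W_partial p (1 - e) \<mu> \<nu>"
    unfolding W_partial_def
  proof (rule INF_greatest, clarify)
    fix g assume "partial_plan (1 - e) \<mu> \<nu> g"
    then have "W_dist p \<mu> \<nu> \<le> ennreal (e powr (1 / p)) + ennreal (plan_cost p g)"
      using W_dist_le_plan_cost_add[OF diam p _ e] by (simp add: plan_cost_def ennreal_plus add.commute)
    then show "W_dist p \<mu> \<nu> - ennreal (e powr (1 / p)) \<le> ennreal (plan_cost p g)"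
      by (simp add: ennreal_minus_le_iff)
  qed
  then show ?thesis by (simp add: ennreal_minus_le_iff add.commute)
qed

lemma W_dist_le_1:
  assumes diam: "\<forall>x y::'a. dist x y \<le> 1" and p: "p \<ge> 1"
  shows "W_dist p \<mu> \<nu> \<le> 1"
  using W_dist_le_W_partial_add[OF diam p, of 1] by (simp add: W_partial_zero)

lemma RPW_le_inverse:
  assumes diam: "\<forall>x y::'a. dist x y \<le> 1" and p: "p \<ge> 1" and k: "0 < k"
  shows "RPW p k \<mu> \<nu> \<le> 1 / k"
proof (cases "k \<ge> 1")
  case True
  have "W_partial p (1 - 1 / k) \<mu> \<nu> \<le> W_dist p \<mu> \<nu>"
    using p True k by (intro W_partial_le_W_dist) auto
  also have "\<dots> \<le> 1"
    by (rule W_dist_le_1[OF diam p])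
  finally have "W_partial p (1 - 1 / k) \<mu> \<nu> \<le> 1" .
  then show ?thesis using True k by (intro RPW_le) auto
next
  case False
  have "RPW p k \<mu> \<nu> \<le> 1"
    using RPW_le[of 1 p \<mu> \<nu> k] k by (simp add: W_partial_zero)
  moreover have "1 \<le> 1 / k"
    using False k by (simp add: le_divide_eq)
  ultimately show ?thesis by linarith
qed

lemma W_dist_le_RPW:
  assumes diam: "\<forall>x y::'a. dist x y \<le> 1" and p: "p \<ge> 1" and k: "0 \<le> k"
  shows "W_dist p \<mu> \<nu> \<le> ennreal (k * RPW p k \<mu> \<nu> + RPW p k \<mu> \<nu> powr (1 / p))"
proof -
  obtain w where w: "W_dist p \<mu> \<nu> = ennreal w" "0 \<le> w"
    using W_dist_le_1[OF diam p] by (cases "W_dist p \<mu> \<nu>" rule: ennreal_cases) (auto simp: top_unique)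
  define f where "f \<epsilon> = k * \<epsilon> + \<epsilon> powr (1 / p)" for \<epsilon> :: real
  \<comment> \<open>Every feasible \<open>\<epsilon>\<close> satisfies \<open>w \<le> f \<epsilon>\<close>, a closed condition, so it passes to the infimum.\<close>
  have "{\<epsilon> \<in> {0..1}. W_partial p (1 - \<epsilon>) \<mu> \<nu> \<le> ennreal (k * \<epsilon>)} \<subseteq> {0..1} \<inter> f -` {w..}"
  proof
    fix \<epsilon> assume "\<epsilon> \<in> {\<epsilon> \<in> {0..1}. W_partial p (1 - \<epsilon>) \<mu> \<nu> \<le> ennreal (k * \<epsilon>)}"
    then have \<epsilon>: "0 \<le> \<epsilon>" "\<epsilon> \<le> 1" "W_partial p (1 - \<epsilon>) \<mu> \<nu> \<le> ennreal (k * \<epsilon>)" by auto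
    have "ennreal w \<le> ennreal (k * \<epsilon>) + ennreal (\<epsilon> powr (1 / p))"
      using W_dist_le_W_partial_add[OF diam p \<epsilon>(1,2)] \<epsilon>(3) w(1) by (metis add_right_mono order_trans)
    then show "\<epsilon> \<in> {0..1} \<inter> f -` {w..}"
      using \<epsilon> k by (simp add: f_def flip: ennreal_plus)
  qed
  moreover have "closed ({0..1} \<inter> f -` {w..})"
    unfolding f_def using p by (intro continuous_closed_preimage continuous_intros continuous_on_powr') auto
  ultimately have "RPW p k \<mu> \<nu> \<in> {0..1} \<inter> f -` {w..}"
    using RPW_in_closure[OF k] closure_minimal by blast
  then show ?thesis
    using w by (simp add: f_def)
qed

end

theorem lemma4p3:
  fixes \<mu> \<nu> :: "'a::metric_space measure" and p k :: real
  assumes diam: "\<forall>x y::'a. dist x y \<le> 1"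
    and mu: "prob_space \<mu>" "sets \<mu> = sets (borel :: 'a measure)"
    and nu: "prob_space \<nu>" "sets \<nu> = sets (borel :: 'a measure)"
    and p: "p \<ge> 1" and k: "k > 0"
  shows "ennreal (RPW p k \<mu> \<nu>) \<le> W_dist p \<mu> \<nu> / ennreal k
       \<and> W_dist p \<mu> \<nu> / ennreal k \<le> ennreal (RPW p k \<mu> \<nu> + k powr (- (p + 1) / p))"
proof
  show "ennreal (RPW p k \<mu> \<nu>) \<le> W_dist p \<mu> \<nu> / ennreal k"
    using p k by (intro RPW_le_W_dist_div) auto
  interpret borel_prob_pair \<mu> \<nu>
    using mu nu by (simp add: borel_prob_pair_def borel_prob_pair_axioms_def)
  define r where "r = RPW p k \<mu> \<nu>"
  have r: "0 \<le> r" "r \<le> 1 / k"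
    using RPW_nonneg[of k] RPW_le_inverse[OF diam p k] k unfolding r_def by auto
  have "r powr (1 / p) / k \<le> (1 / k) powr (1 / p) / k"
    using r p k by (intro divide_right_mono powr_mono2) auto
  also have "\<dots> = k powr (- (p + 1) / p)"
    using k p by (intro inverse_powr_divide) auto
  finally have "(k * r + r powr (1 / p)) / k \<le> r + k powr (- (p + 1) / p)"
    using k by (simp add: add_divide_distrib)
  have "W_dist p \<mu> \<nu> / ennreal k \<le> ennreal (k * r + r powr (1 / p)) / ennreal k"
    using W_dist_le_RPW[OF diam p] k unfolding r_def by (intro divide_right_mono_ennreal) simp
  also have "\<dots> = ennreal ((k * r + r powr (1 / p)) / k)"
    using k r by (intro divide_ennreal) auto
  also have "\<dots> \<le> ennreal (r + k powr (- (p + 1) / p))"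
    by (rule ennreal_leI) fact
  finally show "W_dist p \<mu> \<nu> / ennreal k \<le> ennreal (RPW p k \<mu> \<nu> + k powr (- (p + 1) / p))"
    unfolding r_def .
qed

end
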